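(* Fix $l^0_{jk},l^0_{ki},l^0_{ij}>0$ and let $\mathcal{W}^{ijk}$ be the set of $(w_i,w_j,w_k)\in\mathbb{R}^3$ for which $l_{ab}>0$ defined by $\cosh\frac{l_{ab}}{2}=e^{w_a+w_b}\cosh\frac{l^0_{ab}}{2}$ exist for $ab\in\{jk,ki,ij\}$. For $(w_i,w_j,w_k)\in\mathcal{W}^{ijk}$, let $\theta^i_{jk},\theta^j_{ki},\theta^k_{ij}$ be the lengths of the sides opposite to the sides of lengths $l_{jk},l_{ki},l_{ij}$ in the hyperbolic right-angled hexagon whose three pairwise non-adjacent sides have lengths $l_{jk},l_{ki},l_{ij}$. Then the Jacobian matrix $\frac{\partial(\theta^i_{jk},\theta^j_{ki},\theta^k_{ij})}{\partial(w_i,w_j,w_k)}$ is symmetric.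
   Context: For any three positive numbers there is a hyperbolic right-angled hexagon, unique up to isometry, whose three pairwise non-adjacent sides have these lengths. *)

theory Defs
  imports "HOL-Analysis.Analysis"
begin

definition edge_len :: "real \<Rightarrow> real \<Rightarrow> real \<Rightarrow> real" where
  "edge_len l0 wa wb = (THE l. l > 0 \<and> cosh (l / 2) = exp (wa + wb) * cosh (l0 / 2))"

text \<open>Length of the side opposite to the side of length a in the hyperbolic
right-angled hexagon whose three pairwise non-adjacent sides have lengths a, b, c
(hyperbolic cosine law for right-angled hexagons).\<close>
definition hex_opp :: "real \<Rightarrow> real \<Rightarrow> real \<Rightarrow> real" where
  "hex_opp a b c = (THE t. t > 0 \<and>
      cosh t = (cosh b * cosh c + cosh a) / (sinh b * sinh c))"

text \<open>Admissible set W^{ijk}; coordinates 1,2,3 stand for i,j,k.\<close>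
definition W_ijk :: "real \<Rightarrow> real \<Rightarrow> real \<Rightarrow> (real^3) set" where
  "W_ijk l0jk l0ki l0ij = {w.
      (\<exists>l>0. cosh (l / 2) = exp (w$2 + w$3) * cosh (l0jk / 2)) \<and>
      (\<exists>l>0. cosh (l / 2) = exp (w$3 + w$1) * cosh (l0ki / 2)) \<and>
      (\<exists>l>0. cosh (l / 2) = exp (w$1 + w$2) * cosh (l0ij / 2))}"

definition theta_map :: "real \<Rightarrow> real \<Rightarrow> real \<Rightarrow> real^3 \<Rightarrow> real^3" where
  "theta_map l0jk l0ki l0ij w =
     (let ljk = edge_len l0jk (w$2) (w$3);
          lki = edge_len l0ki (w$3) (w$1);
          lij = edge_len l0ij (w$1) (w$2)
      in vector [hex_opp ljk lki lij, hex_opp lki lij ljk, hex_opp lij ljk lki])"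

end

theory Submission
  imports Defs
begin

text \<open>Each edge length \<open>l\<^sub>a\<^sub>b = 2 arcosh (exp (w\<^sub>a + w\<^sub>b) cosh (l\<^sup>0\<^sub>a\<^sub>b / 2))\<close> depends
on \<open>w\<^sub>a + w\<^sub>b\<close> only, at the rate \<open>r(l\<^sub>a\<^sub>b) = 2 coth (l\<^sub>a\<^sub>b / 2)\<close>. By the cosine law for
right-angled hexagons, all partial derivatives of the three \<open>\<theta>\<close>'s with respect to the edge
lengths share the denominator \<open>sqrt D\<close>, where \<open>D\<close> is a symmetric function of the three
lengths. Since \<open>w\<^sub>j\<close> moves \<open>l\<^sub>j\<^sub>k\<close> and \<open>l\<^sub>i\<^sub>j\<close>, the numerator of \<open>\<partial>\<theta>\<^sup>i\<^sub>j\<^sub>k / \<partial>w\<^sub>j\<close> is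
\<open>sinh l\<^sub>j\<^sub>k r(l\<^sub>j\<^sub>k) - (cosh l\<^sub>k\<^sub>i + cosh l\<^sub>j\<^sub>k cosh l\<^sub>i\<^sub>j) r(l\<^sub>i\<^sub>j) / sinh l\<^sub>i\<^sub>j\<close>, and the
half-angle identities \<open>sinh l r(l) = 2 (1 + cosh l)\<close>, \<open>r(l) / sinh l = 2 / (cosh l - 1)\<close>
turn it into \<open>2 (cosh l\<^sub>i\<^sub>j - 1 - cosh l\<^sub>j\<^sub>k - cosh l\<^sub>k\<^sub>i) / (cosh l\<^sub>i\<^sub>j - 1)\<close>, which is
symmetric in \<open>i\<close> and \<open>j\<close>.\<close>

lemma cosh_real_gt_1: "x \<noteq> 0 \<Longrightarrow> 1 < cosh (x::real)"
  using cosh_real_ge_1[of x] cosh_real_one_iff[of x] by linarith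

lemma has_derivative_compose_field:
  assumes "(g has_derivative g') (at x within s)" "(f has_field_derivative D) (at (g x))"
  shows "((\<lambda>y. f (g y)) has_derivative (\<lambda>h. D * g' h)) (at x within s)"
  using has_derivative_compose[OF assms(1) assms(2)[unfolded has_field_derivative_def]] .

lemma has_derivative_eventually_greater:
  fixes f :: "'a::real_normed_vector \<Rightarrow> real"
  assumes "(f has_derivative f') (at x)" "f x > a"
  shows "\<forall>\<^sub>F y in at x. f y > a"
  using has_derivative_continuous[OF assms(1)] assms(2)
  by (simp add: isCont_def order_tendstoD(1))

lemma has_derivative_vector3:
  fixes f1 f2 f3 :: "'a::real_normed_vector \<Rightarrow> real"
  assumes "(f1 has_derivative f1') F" "(f2 has_derivative f2') F" "(f3 has_derivative f3') F"
  shows "((\<lambda>x. vector [f1 x, f2 x, f3 x] :: real^3) has_derivative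
      (\<lambda>h. vector [f1' h, f2' h, f3' h])) F"
proof -
  have vector3_eq: "vector [u, v, t] = u *\<^sub>R axis 1 1 + v *\<^sub>R axis 2 1 + t *\<^sub>R (axis 3 1 :: real^3)"
    for u v t :: real
    by (simp add: vec_eq_iff forall_3 axis_def)
  show ?thesis
    unfolding vector3_eq by (intro has_derivative_add has_derivative_scaleR_left assms)
qed

lemma transpose_matrix_eq_iff:
  "transpose (matrix f) = matrix f \<longleftrightarrow> (\<forall>i j. f (axis j 1) $ i = f (axis i 1) $ j)"
  by (auto simp: transpose_def matrix_def vec_eq_iff)

lemma exists_cosh_half_eq_iff: "(\<exists>l>0. cosh (l / 2) = q) \<longleftrightarrow> q > (1::real)"
proof
  assume "\<exists>l>0. cosh (l / 2) = q"
  then show "q > 1" using cosh_real_gt_1 by force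
next
  assume "q > 1"
  then have "2 * arcosh q > 0 \<and> cosh (2 * arcosh q / 2) = q"
    using arcosh_less_iff_real[of 1] by simp
  then show "\<exists>l>0. cosh (l / 2) = q" by blast
qed

lemma W_ijk_iff:
  "w \<in> W_ijk l0jk l0ki l0ij \<longleftrightarrow>
     exp (w$2 + w$3) * cosh (l0jk / 2) > 1 \<and> exp (w$3 + w$1) * cosh (l0ki / 2) > 1
     \<and> exp (w$1 + w$2) * cosh (l0ij / 2) > 1"
  by (simp add: W_ijk_def exists_cosh_half_eq_iff)

lemma edge_len_eq_arcosh:
  assumes "exp (wa + wb) * cosh (l0 / 2) > 1"
  shows "edge_len l0 wa wb = 2 * arcosh (exp (wa + wb) * cosh (l0 / 2))"
  unfolding edge_len_def
proof (rule the_equality)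
  fix l assume "l > 0 \<and> cosh (l / 2) = exp (wa + wb) * cosh (l0 / 2)"
  then show "l = 2 * arcosh (exp (wa + wb) * cosh (l0 / 2))"
    using arcosh_cosh_real[of "l / 2"] by auto
qed (use assms in simp)

lemma edge_len_pos:
  assumes "exp (wa + wb) * cosh (l0 / 2) > 1" shows "edge_len l0 wa wb > 0"
  using assms arcosh_less_iff_real[of 1] by (simp add: edge_len_eq_arcosh)

definition edge_rate :: "real \<Rightarrow> real" where
  "edge_rate l = 2 * cosh (l / 2) / sinh (l / 2)"

lemma edge_len_has_derivative:
  fixes fa fb :: "'a::real_normed_vector \<Rightarrow> real"
  assumes "(fa has_derivative fa') (at x)" "(fb has_derivative fb') (at x)"
    and "exp (fa x + fb x) * cosh (l0 / 2) > 1"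
  shows "((\<lambda>y. edge_len l0 (fa y) (fb y)) has_derivative
      (\<lambda>h. edge_rate (edge_len l0 (fa x) (fb x)) * (fa' h + fb' h))) (at x)"
proof -
  define q where "q y = exp (fa y + fb y) * cosh (l0 / 2)" for y
  have dq: "(q has_derivative (\<lambda>h. q x * (fa' h + fb' h))) (at x)"
    unfolding q_def using assms(1,2)
    by (auto intro!: derivative_eq_intros simp: algebra_simps)
  have q_gt_1: "q x > 1" using assms(3) by (simp add: q_def)
  have edge_x: "edge_len l0 (fa x) (fb x) = 2 * arcosh (q x)"
    using q_gt_1 by (simp add: q_def edge_len_eq_arcosh)
  have local_eq: "\<forall>\<^sub>F y in at x. 2 * arcosh (q y) = edge_len l0 (fa y) (fb y)"
    using has_derivative_eventually_greater[OF dq q_gt_1]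
    by eventually_elim (simp add: q_def edge_len_eq_arcosh)
  have "edge_rate (2 * arcosh (q x)) = 2 * q x / sqrt ((q x)\<^sup>2 - 1)"
    using q_gt_1 by (simp add: edge_rate_def sinh_arcosh_real)
  then have "((\<lambda>y. 2 * arcosh (q y)) has_derivative
      (\<lambda>h. edge_rate (2 * arcosh (q x)) * (fa' h + fb' h))) (at x)"
    by (intro has_derivative_eq_rhs[OF has_derivative_mult_right[OF
          has_derivative_compose_field[OF dq arcosh_real_has_field_derivative[OF q_gt_1]]]])
      (simp add: fun_eq_iff)
  then show ?thesis
    unfolding edge_x using local_eq by (rule has_derivative_transform_eventually)
      (simp_all add: edge_x)
qed

lemma sinh_mult_edge_rate:
  assumes "l > 0" shows "sinh l * edge_rate l = 2 * (1 + cosh l)"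
proof -
  have "sinh (l/2) \<noteq> 0" using assms by simp
  then show ?thesis
    using sinh_double[of "l/2"] cosh_double[of "l/2"] cosh_square_eq[of "l/2"]
    by (simp add: edge_rate_def field_simps power2_eq_square)
qed

lemma edge_rate_div_sinh:
  assumes "l > 0" shows "edge_rate l / sinh l = 2 / (cosh l - 1)"
proof -
  have "sinh (l/2) \<noteq> 0" using assms by simp
  then show ?thesis
    using sinh_double[of "l/2"] cosh_double[of "l/2"] cosh_square_eq[of "l/2"]
    by (simp add: edge_rate_def field_simps power2_eq_square)
qed

definition hex_cosh :: "real \<Rightarrow> real \<Rightarrow> real \<Rightarrow> real" where
  "hex_cosh a b c = (cosh b * cosh c + cosh a) / (sinh b * sinh c)"

lemma hex_cosh_gt_1:
  assumes "b > 0" "c > 0" shows "hex_cosh a b c > 1"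
proof -
  have "sinh b * sinh c < cosh b * cosh c"
    using assms sinh_less_cosh_real[of b] sinh_less_cosh_real[of c]
    by (intro mult_strict_mono) auto
  then have "sinh b * sinh c < cosh b * cosh c + cosh a"
    using cosh_real_pos[of a] by linarith
  then show ?thesis
    using assms by (simp add: hex_cosh_def less_divide_eq)
qed

lemma hex_opp_eq_arcosh:
  assumes "b > 0" "c > 0" shows "hex_opp a b c = arcosh (hex_cosh a b c)"
  unfolding hex_opp_def hex_cosh_def[symmetric]
proof (rule the_equality)
  show "arcosh (hex_cosh a b c) > 0 \<and> cosh (arcosh (hex_cosh a b c)) = hex_cosh a b c"
    using hex_cosh_gt_1[OF assms, of a] arcosh_less_iff_real[of 1] by simp
next
  fix t assume "t > 0 \<and> cosh t = hex_cosh a b c"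
  then show "t = arcosh (hex_cosh a b c)" using arcosh_cosh_real[of t] by auto
qed

definition hex_gram :: "real \<Rightarrow> real \<Rightarrow> real \<Rightarrow> real" where
  "hex_gram a b c = (cosh a)\<^sup>2 + (cosh b)\<^sup>2 + (cosh c)\<^sup>2 + 2 * cosh a * cosh b * cosh c - 1"

lemma hex_gram_pos: "hex_gram a b c > 0"
proof -
  have "(cosh a)\<^sup>2 \<ge> 1" "(cosh b)\<^sup>2 \<ge> 1" "(cosh c)\<^sup>2 \<ge> 1"
    by (simp_all add: cosh_square_eq)
  moreover have "cosh a * cosh b * cosh c > 0" by simp
  ultimately show ?thesis unfolding hex_gram_def by linarith
qed

lemma hex_gram_rotate: "hex_gram b c a = hex_gram a b c"
  unfolding hex_gram_def by algebra

lemma hex_cosh_squared_minus_1: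
  assumes "b > 0" "c > 0"
  shows "(hex_cosh a b c)\<^sup>2 - 1 = hex_gram a b c / (sinh b * sinh c)\<^sup>2"
proof -
  have "sinh b \<noteq> 0" "sinh c \<noteq> 0" using assms by auto
  then show ?thesis
    unfolding hex_cosh_def hex_gram_def
    using cosh_square_eq[of b] cosh_square_eq[of c]
    by (simp add: field_simps) algebra
qed

lemma hex_cosh_has_derivative:
  fixes fa fb fc :: "'a::real_normed_vector \<Rightarrow> real"
  assumes "(fa has_derivative fa') (at x)" "(fb has_derivative fb') (at x)"
    "(fc has_derivative fc') (at x)" "fb x > 0" "fc x > 0"
  shows "((\<lambda>y. hex_cosh (fa y) (fb y) (fc y)) has_derivative (\<lambda>h.
      (sinh (fa x) * fa' h - (cosh (fc x) + cosh (fa x) * cosh (fb x)) / sinh (fb x) * fb' h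
        - (cosh (fb x) + cosh (fa x) * cosh (fc x)) / sinh (fc x) * fc' h)
      / (sinh (fb x) * sinh (fc x)))) (at x)"
proof -
  note cosh' = has_derivative_compose_field[OF _ has_field_derivative_cosh[OF DERIV_ident]]
  note sinh' = has_derivative_compose_field[OF _ has_field_derivative_sinh[OF DERIV_ident]]
  have sinh_nz: "sinh (fb x) * sinh (fc x) \<noteq> 0" using assms(4,5) by simp
  note quotient_rule = has_derivative_divide'[OF
      has_derivative_add[OF has_derivative_mult[OF cosh'[OF assms(2)] cosh'[OF assms(3)]]
        cosh'[OF assms(1)]]
      has_derivative_mult[OF sinh'[OF assms(2)] sinh'[OF assms(3)]] sinh_nz]
  show ?thesis
    unfolding hex_cosh_def
    using sinh_nz cosh_square_eq[of "fb x"] cosh_square_eq[of "fc x"]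
    by (intro has_derivative_eq_rhs[OF quotient_rule] ext) (simp add: field_simps; algebra)
qed

definition hex_opp_deriv :: "real \<Rightarrow> real \<Rightarrow> real \<Rightarrow> real \<Rightarrow> real \<Rightarrow> real \<Rightarrow> real" where
  "hex_opp_deriv a b c da db dc =
     (sinh a * da - (cosh c + cosh a * cosh b) / sinh b * db
        - (cosh b + cosh a * cosh c) / sinh c * dc) / sqrt (hex_gram a b c)"

lemma hex_opp_has_derivative:
  fixes fa fb fc :: "'a::real_normed_vector \<Rightarrow> real"
  assumes "(fa has_derivative fa') (at x)" "(fb has_derivative fb') (at x)"
    "(fc has_derivative fc') (at x)" "fb x > 0" "fc x > 0"
  shows "((\<lambda>y. hex_opp (fa y) (fb y) (fc y)) has_derivative
      (\<lambda>h. hex_opp_deriv (fa x) (fb x) (fc x) (fa' h) (fb' h) (fc' h))) (at x)"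
proof -
  let ?u = "hex_cosh (fa x) (fb x) (fc x)"
  have "\<forall>\<^sub>F y in at x. fb y > 0 \<and> fc y > 0"
    using has_derivative_eventually_greater[OF assms(2,4)]
      has_derivative_eventually_greater[OF assms(3,5)] by (rule eventually_conj)
  then have local_eq:
      "\<forall>\<^sub>F y in at x. arcosh (hex_cosh (fa y) (fb y) (fc y)) = hex_opp (fa y) (fb y) (fc y)"
    by eventually_elim (simp add: hex_opp_eq_arcosh)
  have sinh_pos: "sinh (fb x) > 0" "sinh (fc x) > 0" using assms(4,5) by simp_all
  have sqrt_gram_pos: "sqrt (hex_gram (fa x) (fb x) (fc x)) > 0" using hex_gram_pos by simp
  have "sqrt (?u\<^sup>2 - 1) = sqrt (hex_gram (fa x) (fb x) (fc x)) / (sinh (fb x) * sinh (fc x))"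
    using sinh_pos by (simp add: hex_cosh_squared_minus_1 assms(4,5) real_sqrt_divide abs_of_pos)
  then have "((\<lambda>y. arcosh (hex_cosh (fa y) (fb y) (fc y))) has_derivative
      (\<lambda>h. hex_opp_deriv (fa x) (fb x) (fc x) (fa' h) (fb' h) (fc' h))) (at x)"
    using sinh_pos sqrt_gram_pos
    by (intro has_derivative_eq_rhs[OF has_derivative_compose_field[OF
          hex_cosh_has_derivative[OF assms]
          arcosh_real_has_field_derivative[OF hex_cosh_gt_1[OF assms(4,5)]]]])
      (simp add: hex_opp_deriv_def fun_eq_iff field_simps)
  then show ?thesis
    using local_eq by (rule has_derivative_transform_eventually)
      (simp_all add: hex_opp_eq_arcosh assms(4,5))
qed

lemma hex_cross_term_edge_rate:
  assumes "a > 0" "c > 0"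
  shows "sinh a * edge_rate a - (cosh b + cosh a * cosh c) / sinh c * edge_rate c
    = 2 * (cosh c - 1 - cosh a - cosh b) / (cosh c - 1)"
proof -
  have "cosh c - 1 \<noteq> 0" using cosh_real_gt_1[of c] assms(2) by linarith
  moreover have "(cosh b + cosh a * cosh c) / sinh c * edge_rate c
      = (cosh b + cosh a * cosh c) * (edge_rate c / sinh c)" by simp
  ultimately show ?thesis
    using sinh_mult_edge_rate[OF assms(1)] edge_rate_div_sinh[OF assms(2)]
    by (simp add: field_simps)
qed

lemma hex_opp_deriv_edge_rate_rotate:
  assumes "a > 0" "b > 0" "c > 0"
  shows "hex_opp_deriv a b c (edge_rate a) 0 (edge_rate c)
       = hex_opp_deriv b c a (edge_rate b) (edge_rate c) 0"
  using hex_cross_term_edge_rate[OF assms(1,3), of b] hex_cross_term_edge_rate[OF assms(2,3), of a]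
  by (simp add: hex_opp_deriv_def hex_gram_rotate add.commute)

definition theta_map_deriv :: "real \<Rightarrow> real \<Rightarrow> real \<Rightarrow> real^3 \<Rightarrow> real^3 \<Rightarrow> real^3" where
  "theta_map_deriv l0jk l0ki l0ij w h =
     (let ljk = edge_len l0jk (w$2) (w$3);
          lki = edge_len l0ki (w$3) (w$1);
          lij = edge_len l0ij (w$1) (w$2);
          djk = edge_rate ljk * (h$2 + h$3);
          dki = edge_rate lki * (h$3 + h$1);
          dij = edge_rate lij * (h$1 + h$2)
      in vector [hex_opp_deriv ljk lki lij djk dki dij, hex_opp_deriv lki lij ljk dki dij djk,
                 hex_opp_deriv lij ljk lki dij djk dki])"

lemma theta_map_has_derivative:
  assumes "w \<in> W_ijk l0jk l0ki l0ij"
  shows "(theta_map l0jk l0ki l0ij has_derivative theta_map_deriv l0jk l0ki l0ij w) (at w)"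
proof -
  note coord = bounded_linear.has_derivative[OF bounded_linear_vec_nth has_derivative_ident]
  from assms show ?thesis
    unfolding W_ijk_iff theta_map_def theta_map_deriv_def Let_def
    by (intro has_derivative_vector3 hex_opp_has_derivative
        edge_len_has_derivative[OF coord coord] edge_len_pos) auto
qed

lemma theta_map_deriv_symmetric:
  assumes "w \<in> W_ijk l0jk l0ki l0ij"
  shows "transpose (matrix (theta_map_deriv l0jk l0ki l0ij w))
       = matrix (theta_map_deriv l0jk l0ki l0ij w)"
proof -
  let ?a = "edge_len l0jk (w$2) (w$3)" and ?b = "edge_len l0ki (w$3) (w$1)"
    and ?c = "edge_len l0ij (w$1) (w$2)"
  have "?a > 0" "?b > 0" "?c > 0" using assms by (simp_all add: W_ijk_iff edge_len_pos)
  then show ?thesis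
    unfolding transpose_matrix_eq_iff theta_map_deriv_def Let_def
    by (simp add: forall_3 axis_def hex_opp_deriv_edge_rate_rotate)
qed

theorem lemma2:
  fixes l0jk l0ki l0ij :: real and w :: "real^3"
  assumes "l0jk > 0" and "l0ki > 0" and "l0ij > 0"
    and "w \<in> W_ijk l0jk l0ki l0ij"
  shows "\<exists>J :: real^3^3.
           (theta_map l0jk l0ki l0ij has_derivative (\<lambda>h. J *v h)) (at w)
           \<and> transpose J = J"
proof -
  have "(theta_map l0jk l0ki l0ij has_derivative
      (\<lambda>h. matrix (theta_map_deriv l0jk l0ki l0ij w) *v h)) (at w)"
    using theta_map_has_derivative[OF assms(4)] by (simp add: has_derivative_bounded_linear)
  then show ?thesis using theta_map_deriv_symmetric[OF assms(4)] by blast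
qed

end
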